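(* Let $E$ be a CM field that is a finite Galois extension of $\mathbb{Q}$ with Galois group $G$, with a fixed embedding $E\hookrightarrow\mathbb{C}$, and let $V$ be a finite-dimensional $E$-vector space. Let $\mathfrak{k}$ be a semisimple $\mathbb{Q}$-Lie subalgebra of $\mathfrak{sl}_E(V)$ and $\mathfrak{k}_\mathbb{C}=\mathfrak{k}\otimes_\mathbb{Q}\mathbb{C}$. Suppose: (I) there exists $\sigma_0\in G$ such that $P_{\sigma_0}(\mathfrak{k}_\mathbb{C})=\mathfrak{sl}_\mathbb{C}(V_{\sigma_0})$; (II) for each pair $(\sigma,\tau)\in G^2$ with $\sigma\neq\tau$ and $\sigma\neq\bar\tau$, there exists $\kappa\in G$ such that, with $\sigma_0=\kappa\sigma$, $\tau_0=\kappa\tau$, one has $P_{\sigma_0,\tau_0}(\mathfrak{k}_\mathbb{C})=\mathfrak{sl}_\mathbb{C}(V_{\sigma_0})\oplus\mathfrak{sl}_\mathbb{C}(V_{\tau_0})$. Then $\dim_\mathbb{Q}\mathfrak{k}\ge \frac12[E:\mathbb{Q}]\big((\dim_E V)^2-1\big)$.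
   Context: $V_\mathbb{C}=V\otimes_\mathbb{Q}\mathbb{C}=\bigoplus_{\sigma\in G}V_\sigma$, where (identifying $\sigma\in G$ with the embedding $E\xrightarrow{\sigma}E\subset\mathbb{C}$) $V_\sigma=\{w\in V_\mathbb{C}:(e\otimes1)w=\sigma(e)w\ \forall e\in E\}$. For a commutative ring $R$ and free $R$-module $N$ of finite rank, $\mathfrak{sl}_R(N)$ is the Lie algebra of trace-zero $R$-endomorphisms. One has $\mathfrak{sl}_E(V)\otimes_\mathbb{Q}\mathbb{C}=\bigoplus_{\sigma\in G}\mathfrak{sl}_\mathbb{C}(V_\sigma)$; $P_\sigma$ denotes the projection onto $\mathfrak{sl}_\mathbb{C}(V_\sigma)$ and, for $\sigma\ne\tau$, $P_{\sigma,\tau}$ the projection onto $\mathfrak{sl}_\mathbb{C}(V_\sigma)\oplus\mathfrak{sl}_\mathbb{C}(V_\tau)$. For $\sigma\in G$, $\bar\sigma$ denotes the composition of $\sigma$ with complex conjugation of $E$. *)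

theory Defs
  imports "HOL-Analysis.Analysis"
begin

definition qscalec :: "rat \<Rightarrow> complex \<Rightarrow> complex" where
  "qscalec q z = of_rat q * z"

definition qscale :: "rat \<Rightarrow> complex^'n^'n \<Rightarrow> complex^'n^'n" where
  "qscale q A = (\<chi> i j. of_rat q * A $ i $ j)"

definition cscale :: "complex \<Rightarrow> complex^'n^'n \<Rightarrow> complex^'n^'n" where
  "cscale c A = (\<chi> i j. c * A $ i $ j)"

definition cscale2 :: "complex \<Rightarrow> (complex^'n^'n) \<times> (complex^'n^'n)
    \<Rightarrow> (complex^'n^'n) \<times> (complex^'n^'n)" where
  "cscale2 c P = (cscale c (fst P), cscale c (snd P))"

definition qdeg :: "complex set \<Rightarrow> nat" where
  "qdeg E = vector_space.dim qscalec E"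

definition qdim :: "(complex^'n^'n) set \<Rightarrow> nat" where
  "qdim K = vector_space.dim qscale K"

definition subfield_C :: "complex set \<Rightarrow> bool" where
  "subfield_C E \<longleftrightarrow> 0 \<in> E \<and> 1 \<in> E \<and>
     (\<forall>x\<in>E. \<forall>y\<in>E. x + y \<in> E \<and> x * y \<in> E) \<and>
     (\<forall>x\<in>E. - x \<in> E \<and> inverse x \<in> E)"

definition finite_over_Q :: "complex set \<Rightarrow> bool" where
  "finite_over_Q E \<longleftrightarrow> (\<exists>B. finite B \<and> B \<subseteq> E \<and> module.span qscalec B = E)"

definition field_hom_on :: "complex set \<Rightarrow> (complex \<Rightarrow> complex) \<Rightarrow> bool" where
  "field_hom_on F \<phi> \<longleftrightarrow> \<phi> 1 = 1 \<and>
     (\<forall>x\<in>F. \<forall>y\<in>F. \<phi> (x + y) = \<phi> x + \<phi> y \<and> \<phi> (x * y) = \<phi> x * \<phi> y)"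

text \<open>The automorphism group Gal(E/Q), automorphisms being extended by the identity
  outside E.\<close>

definition aut :: "complex set \<Rightarrow> (complex \<Rightarrow> complex) set" where
  "aut E = {\<sigma>. field_hom_on E \<sigma> \<and> bij_betw \<sigma> E E \<and> (\<forall>x. x \<notin> E \<longrightarrow> \<sigma> x = x)}"

definition galois_over_Q :: "complex set \<Rightarrow> bool" where
  "galois_over_Q E \<longleftrightarrow> subfield_C E \<and> finite_over_Q E \<and> card (aut E) = qdeg E"

definition totally_real :: "complex set \<Rightarrow> bool" where
  "totally_real F \<longleftrightarrow> (\<forall>\<phi>. field_hom_on F \<phi> \<longrightarrow> \<phi> ` F \<subseteq> \<real>)"

definition totally_imaginary :: "complex set \<Rightarrow> bool" where
  "totally_imaginary E \<longleftrightarrow> (\<forall>\<phi>. field_hom_on E \<phi> \<longrightarrow> \<not> \<phi> ` E \<subseteq> \<real>)"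

definition degree_two_over :: "complex set \<Rightarrow> complex set \<Rightarrow> bool" where
  "degree_two_over E F \<longleftrightarrow> (\<exists>b1\<in>E. \<exists>b2\<in>E.
      \<forall>x\<in>E. \<exists>!(c1, c2). c1 \<in> F \<and> c2 \<in> F \<and> x = c1 * b1 + c2 * b2)"

definition CM_field :: "complex set \<Rightarrow> bool" where
  "CM_field E \<longleftrightarrow> subfield_C E \<and> finite_over_Q E \<and> totally_imaginary E \<and>
     (\<exists>F. subfield_C F \<and> F \<subseteq> E \<and> totally_real F \<and> degree_two_over E F)"

definition conj_aut :: "complex set \<Rightarrow> (complex \<Rightarrow> complex) \<Rightarrow> complex \<Rightarrow> complex" where
  "conj_aut E \<sigma> = (\<lambda>x. if x \<in> E then cnj (\<sigma> x) else x)"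

text \<open>V = E^n with n = CARD('n); End_E(V) = n x n matrices with entries in E.\<close>

definition sl_E :: "complex set \<Rightarrow> (complex^'n^'n) set" where
  "sl_E E = {A. (\<forall>i j. A $ i $ j \<in> E) \<and> trace A = 0}"

definition sl_C :: "(complex^'n^'n) set" where
  "sl_C = {A. trace A = 0}"

definition bracket :: "complex^'n^'n \<Rightarrow> complex^'n^'n \<Rightarrow> complex^'n^'n" where
  "bracket A B = A ** B - B ** A"

definition lie_subalgebra_Q :: "(complex^'n^'n) set \<Rightarrow> bool" where
  "lie_subalgebra_Q K \<longleftrightarrow> module.subspace qscale K \<and> (\<forall>A\<in>K. \<forall>B\<in>K. bracket A B \<in> K)"

definition lie_ideal_Q :: "(complex^'n^'n) set \<Rightarrow> (complex^'n^'n) set \<Rightarrow> bool" where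
  "lie_ideal_Q K I \<longleftrightarrow> module.subspace qscale I \<and> I \<subseteq> K \<and> (\<forall>A\<in>K. \<forall>B\<in>I. bracket A B \<in> I)"

fun derived :: "(complex^'n^'n) set \<Rightarrow> nat \<Rightarrow> (complex^'n^'n) set" where
  "derived I 0 = I"
| "derived I (Suc m) = module.span qscale {bracket A B | A B. A \<in> derived I m \<and> B \<in> derived I m}"

definition solvable_Q :: "(complex^'n^'n) set \<Rightarrow> bool" where
  "solvable_Q I \<longleftrightarrow> (\<exists>m. derived I m \<subseteq> {0})"

definition semisimple_Q :: "(complex^'n^'n) set \<Rightarrow> bool" where
  "semisimple_Q K \<longleftrightarrow> lie_subalgebra_Q K \<and>
     (\<forall>I. lie_ideal_Q K I \<and> solvable_Q I \<longrightarrow> I = {0})"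

text \<open>Entrywise application of an embedding sigma; under
  sl_E(V) (x)_Q C = (+)_sigma sl_C(V_sigma) the sigma-component of X (x) 1 is apply_emb sigma X.\<close>

definition apply_emb :: "(complex \<Rightarrow> complex) \<Rightarrow> complex^'n^'n \<Rightarrow> complex^'n^'n" where
  "apply_emb \<sigma> A = (\<chi> i j. \<sigma> (A $ i $ j))"

definition P1 :: "(complex \<Rightarrow> complex) \<Rightarrow> (complex^'n^'n) set \<Rightarrow> (complex^'n^'n) set" where
  "P1 \<sigma> K = module.span cscale (apply_emb \<sigma> ` K)"

definition P2 :: "(complex \<Rightarrow> complex) \<Rightarrow> (complex \<Rightarrow> complex) \<Rightarrow> (complex^'n^'n) set
    \<Rightarrow> ((complex^'n^'n) \<times> (complex^'n^'n)) set" where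
  "P2 \<sigma> \<tau> K = module.span cscale2 ((\<lambda>X. (apply_emb \<sigma> X, apply_emb \<tau> X)) ` K)"

end

theory Submission
  imports Defs "HOL-Library.Function_Algebras"
begin

(* Choose a set S of embeddings containing sigma0, never containing both sigma and conj sigma,
   with |S| >= [E:Q]/2.  Hypothesis (II) gives the pair condition for every two distinct
   elements of S, after a Galois descent: spanning is witnessed by a nonzero determinant with
   entries in E, and an automorphism kappa commutes with determinants.  The complex span L of
   the tuples (sigma X) (sigma in S, X in k) is then a Lie subalgebra of the product of |S| copies
   of sl_n(C) that maps onto every factor and onto every pair of factors.  Since sl_n(C) is simple
   with trivial centre, a Goursat-type induction shows that L is the whole product, hence
   dim_Q k >= dim_C L = |S| (n^2 - 1).  Semisimplicity of k is only used through its closure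
   under brackets. *)

section \<open>Matrix units and the simplicity of sl_n(C)\<close>

interpretation cs: vector_space "cscale :: complex \<Rightarrow> complex^'n^'n \<Rightarrow> complex^'n^'n"
  by unfold_locales (simp_all add: vec_eq_iff cscale_def algebra_simps)

definition mat_unit :: "'n \<Rightarrow> 'n \<Rightarrow> complex^'n^'n" where
  "mat_unit a b = (\<chi> i j. if i = a \<and> j = b then 1 else 0)"

lemma mat_unit_nth [simp]: "mat_unit a b $ i $ j = (if i = a \<and> j = b then 1 else 0)"
  by (simp add: mat_unit_def)

lemma mat_unit_mult_left [simp]: "(mat_unit a b ** y) $ i $ j = (if i = a then y $ b $ j else 0)"
  by (simp add: matrix_matrix_mult_def if_distrib[of "\<lambda>x. x * _"] cong: if_cong)

lemma mat_unit_mult_right [simp]: "(y ** mat_unit a b) $ i $ j = (if j = b then y $ i $ a else 0)"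
  by (simp add: matrix_matrix_mult_def if_distrib[of "\<lambda>x. _ * x"] cong: if_cong)

lemma mat_unit_neq_0: "mat_unit a b \<noteq> 0"
proof
  assume "mat_unit a b = 0"
  then have "mat_unit a b $ a $ b = 0" by simp
  then show False by simp
qed

lemma cscale_nth [simp]: "cscale c A $ i $ j = c * A $ i $ j"
  by (simp add: cscale_def)

lemma matrix_eq_sum_mat_units: "X = (\<Sum>i\<in>UNIV. \<Sum>j\<in>UNIV. cscale (X$i$j) (mat_unit i j))"
proof -
  have "cscale (X$i$j) (mat_unit i j) $ p $ q = (if j = q then (if i = p then X$i$j else 0) else 0)"
    for i j p q by simp
  then show ?thesis by (simp add: vec_eq_iff del: cscale_nth mat_unit_nth)
qed

lemma bracket_nth [simp]: "bracket A B $ i $ j = (A ** B) $ i $ j - (B ** A) $ i $ j"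
  by (simp add: bracket_def)

lemma subspace_sl_C: "cs.subspace sl_C"
  by (auto simp: cs.subspace_def sl_C_def trace_def sum.distrib sum_distrib_left[symmetric])

lemma zero_in_sl_C: "0 \<in> sl_C"
  by (simp add: sl_C_def trace_def)

lemma diff_in_sl_C: "x \<in> sl_C \<Longrightarrow> y \<in> sl_C \<Longrightarrow> x - y \<in> sl_C"
  by (simp add: sl_C_def trace_def sum_subtractf)

lemma mat_unit_in_sl_C: "a \<noteq> b \<Longrightarrow> mat_unit a b \<in> sl_C"
  by (auto simp: sl_C_def trace_def intro!: sum.neutral)

lemma mat_unit_diff_in_sl_C: "mat_unit a a - mat_unit b b \<in> sl_C"
  by (simp add: sl_C_def trace_def sum_subtractf)

lemma bracket_swap: "bracket x z = cscale (-1) (bracket z x)"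
  by (simp add: vec_eq_iff)

lemma matrix_add_rdistrib: "((A::'a::semiring_1^'n^'m) + B) ** C = A ** C + B ** C"
  by (vector matrix_matrix_mult_def sum.distrib[symmetric] field_simps)

lemma bracket_add_right: "bracket z (x + y) = bracket z x + bracket z y"
  and bracket_add_left: "bracket (x + y) z = bracket x z + bracket y z"
  by (simp_all add: bracket_def matrix_add_ldistrib matrix_add_rdistrib)

lemma bracket_cscale_right: "bracket z (cscale c x) = cscale c (bracket z x)"
  and bracket_cscale_left: "bracket (cscale c x) z = cscale c (bracket x z)"
  by (simp_all add: vec_eq_iff matrix_matrix_mult_def sum_distrib_left algebra_simps)

lemma bracket_0 [simp]: "bracket 0 A = 0" "bracket A 0 = 0"
  by (simp_all add: bracket_def)

definition sl_ideal :: "(complex^'n^'n) set \<Rightarrow> bool" where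
  "sl_ideal I \<longleftrightarrow> cs.subspace I \<and> I \<subseteq> sl_C \<and> (\<forall>z\<in>sl_C. \<forall>x\<in>I. bracket z x \<in> I)"

lemma sl_ideal_bracket_left: "sl_ideal I \<Longrightarrow> z \<in> sl_C \<Longrightarrow> x \<in> I \<Longrightarrow> bracket z x \<in> I"
  by (simp add: sl_ideal_def)

lemma sl_ideal_bracket_right: "sl_ideal I \<Longrightarrow> x \<in> I \<Longrightarrow> z \<in> sl_C \<Longrightarrow> bracket x z \<in> I"
  by (metis bracket_swap cs.subspace_scale sl_ideal_def)

lemma sl_ideal_cscale_cancel: "sl_ideal I \<Longrightarrow> cscale c x \<in> I \<Longrightarrow> c \<noteq> 0 \<Longrightarrow> x \<in> I"
  using cs.subspace_scale[of I "cscale c x" "inverse c"] by (simp add: sl_ideal_def)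

lemma sl_ideal_mat_unit:
  assumes I: "sl_ideal I" and y: "y \<in> I" "y \<noteq> 0"
  obtains a b where "a \<noteq> b" "mat_unit a b \<in> I"
proof (cases "\<exists>a b. a \<noteq> b \<and> y$a$b \<noteq> 0")
  case True
  then obtain a b where ab: "a \<noteq> b" "y$a$b \<noteq> 0" by blast
  have "bracket (mat_unit b a) (bracket (mat_unit b a) y) = cscale (-2 * y$a$b) (mat_unit b a)"
    using ab by (auto simp: vec_eq_iff)
  moreover have "bracket (mat_unit b a) (bracket (mat_unit b a) y) \<in> I"
    using I y ab by (simp add: sl_ideal_bracket_left mat_unit_in_sl_C)
  ultimately have "cscale (-2 * y$a$b) (mat_unit b a) \<in> I" by (simp only:)
  from sl_ideal_cscale_cancel[OF I this] have "mat_unit b a \<in> I" using ab by simp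
  with ab(1) show ?thesis using that[of b a] by simp
next
  case False
  then have diag: "y$i$j = 0" if "i \<noteq> j" for i j using that by blast
  obtain a where a: "y$a$a \<noteq> 0" using y(2) diag by (metis vec_eq_iff zero_index)
  have "\<exists>b. y$b$b \<noteq> y$a$a"
  proof (rule ccontr)
    assume "\<nexists>b. y$b$b \<noteq> y$a$a"
    then obtain c where "y$i$i = c" and "c \<noteq> 0" for i using a by blast
    then have "trace y \<noteq> 0" by (simp add: trace_def)
    moreover have "trace y = 0" using I y by (auto simp: sl_ideal_def sl_C_def)
    ultimately show False by simp
  qed
  then obtain b where b: "y$b$b \<noteq> y$a$a" ..
  then have ab: "a \<noteq> b" by blast
  have "bracket (mat_unit a b) y = cscale (y$b$b - y$a$a) (mat_unit a b)"
    using diag by (auto simp: vec_eq_iff)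
  moreover have "bracket (mat_unit a b) y \<in> I"
    using I y ab by (simp add: sl_ideal_bracket_left mat_unit_in_sl_C)
  ultimately have "cscale (y$b$b - y$a$a) (mat_unit a b) \<in> I" by (simp only:)
  from sl_ideal_cscale_cancel[OF I this] have "mat_unit a b \<in> I" using b by simp
  with ab show ?thesis by (rule that)
qed

lemma bracket_mat_unit_mat_unit: "bracket (mat_unit i k) (mat_unit k j) = (if i = j then mat_unit i i - mat_unit k k else mat_unit i j)"
  by (auto simp: vec_eq_iff)

lemma sl_ideal_mat_unit_all:
  assumes I: "sl_ideal I" and ab: "a \<noteq> b" "mat_unit a b \<in> I" and ij: "i \<noteq> j"
  shows "mat_unit i j \<in> I"
proof -
  have row: "mat_unit a k \<in> I" if "k \<noteq> a" for k
  proof (cases "k = b")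
    case False
    then have "bracket (mat_unit a b) (mat_unit b k) \<in> I"
      using I ab by (intro sl_ideal_bracket_right mat_unit_in_sl_C) auto
    then show ?thesis using that by (simp add: bracket_mat_unit_mat_unit)
  qed (use ab in simp)
  have col: "mat_unit k a \<in> I" if "k \<noteq> a" for k
  proof -
    have "bracket (mat_unit k a) (mat_unit a k) \<in> I"
      using I row that by (intro sl_ideal_bracket_left mat_unit_in_sl_C)
    then have "bracket (bracket (mat_unit k a) (mat_unit a k)) (mat_unit k a) \<in> I"
      using that by (rule sl_ideal_bracket_right[OF I, OF _ mat_unit_in_sl_C])
    moreover have "bracket (bracket (mat_unit k a) (mat_unit a k)) (mat_unit k a) = cscale 2 (mat_unit k a)"
      using that by (auto simp: vec_eq_iff)
    ultimately have "cscale 2 (mat_unit k a) \<in> I" by (simp only:)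
    from sl_ideal_cscale_cancel[OF I this] show ?thesis by simp
  qed
  show ?thesis
  proof (cases "i = a \<or> j = a")
    case False
    then have "bracket (mat_unit i a) (mat_unit a j) \<in> I"
      using col by (intro sl_ideal_bracket_right[OF I] mat_unit_in_sl_C) auto
    then show ?thesis using ij by (simp add: bracket_mat_unit_mat_unit)
  qed (use ij row col in auto)
qed

lemma sl_C_subset_span_mat_units:
  "sl_C \<subseteq> cs.span ({mat_unit i j | i j. i \<noteq> j} \<union> {mat_unit i i - mat_unit j j | i j. True})"
proof
  fix A :: "complex^'n^'n"
  assume A: "A \<in> sl_C"
  define a :: 'n where "a = undefined"
  define T where "T i j = (if i = j then cscale (A$i$i) (mat_unit i i - mat_unit a a)
    else cscale (A$i$j) (mat_unit i j))" for i j
  have T: "T i j $ p $ q = (if j = q then (if i = p then A$i$j else 0) else 0)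
      - (if j = i then (if p = a \<and> q = a then A$i$i else 0) else 0)" for i j p q
    by (auto simp: T_def)
  have "(\<Sum>i\<in>UNIV. \<Sum>j\<in>UNIV. T i j) $ p $ q = A $ p $ q" for p q
  proof -
    have "(\<Sum>i\<in>UNIV. \<Sum>j\<in>UNIV. T i j) $ p $ q
        = (\<Sum>i\<in>UNIV. (if i = p then A$i$q else 0) - (if p = a \<and> q = a then A$i$i else 0))"
      by (simp add: T sum_subtractf)
    also have "\<dots> = A $ p $ q - (if p = a \<and> q = a then trace A else 0)"
      by (auto simp: sum_subtractf trace_def)
    finally show ?thesis using A by (simp add: sl_C_def)
  qed
  then have "A = (\<Sum>i\<in>UNIV. \<Sum>j\<in>UNIV. T i j)" by (simp add: vec_eq_iff)
  also have "\<dots> \<in> cs.span ({mat_unit i j | i j. i \<noteq> j} \<union> {mat_unit i i - mat_unit j j | i j. True})"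
    unfolding T_def by (intro cs.span_sum) (auto intro!: cs.span_scale[OF cs.span_base])
  finally show "A \<in> cs.span ({mat_unit i j | i j. i \<noteq> j} \<union> {mat_unit i i - mat_unit j j | i j. True})" .
qed

lemma sl_ideal_eq_sl_C:
  assumes I: "sl_ideal I" and y: "y \<in> I" "y \<noteq> 0"
  shows "I = sl_C"
proof
  show "I \<subseteq> sl_C" using I by (simp add: sl_ideal_def)
  obtain a b where ab: "a \<noteq> b" "mat_unit a b \<in> I" using sl_ideal_mat_unit[OF I y] .
  have units: "mat_unit i j \<in> I" if "i \<noteq> j" for i j
    using sl_ideal_mat_unit_all[OF I ab that] .
  have "mat_unit i i - mat_unit j j \<in> I" for i j
  proof (cases "i = j")
    case False
    then have "bracket (mat_unit i j) (mat_unit j i) \<in> I"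
      using I units by (intro sl_ideal_bracket_left mat_unit_in_sl_C) auto
    then show ?thesis by (simp add: bracket_mat_unit_mat_unit)
  qed (use I in \<open>simp add: sl_ideal_def cs.subspace_0\<close>)
  then have "cs.span ({mat_unit i j | i j. i \<noteq> j} \<union> {mat_unit i i - mat_unit j j | i j. True}) \<subseteq> I"
    using I units by (intro cs.span_minimal) (auto simp: sl_ideal_def)
  then show "sl_C \<subseteq> I" using sl_C_subset_span_mat_units by blast
qed

lemma exists_neq_if_two_le_card: "2 \<le> CARD('a::finite) \<Longrightarrow> \<exists>a b::'a. a \<noteq> b"
proof (rule ccontr)
  assume "2 \<le> CARD('a)" "\<nexists>a b::'a. a \<noteq> b"
  then have "CARD('a) \<le> Suc 0" using card_le_Suc0_iff_eq[of "UNIV::'a set"] by simp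
  then show False using \<open>2 \<le> CARD('a)\<close> by simp
qed

lemma sl_C_centre_trivial:
  assumes n: "CARD('n) \<ge> 2" and u: "u \<in> sl_C" and central: "\<forall>y\<in>sl_C. bracket u y = 0"
  shows "u = (0 :: complex^'n^'n)"
proof (rule ccontr)
  assume "u \<noteq> 0"
  define Z :: "(complex^'n^'n) set" where "Z = {v \<in> sl_C. \<forall>y\<in>sl_C. bracket y v = 0}"
  have "sl_ideal Z"
    using subspace_sl_C
    by (auto simp: sl_ideal_def Z_def cs.subspace_def bracket_add_right bracket_cscale_right)
  moreover have "u \<in> Z"
  proof -
    have "bracket y u = 0" if "y \<in> sl_C" for y
      using central that by (subst bracket_swap) simp
    then show ?thesis using u by (simp add: Z_def)
  qed
  ultimately have Z: "Z = sl_C" using \<open>u \<noteq> 0\<close> by (rule sl_ideal_eq_sl_C)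
  obtain a b :: 'n where ab: "a \<noteq> b" using exists_neq_if_two_le_card[OF n] by blast
  then have "mat_unit a b \<in> Z" unfolding Z by (rule mat_unit_in_sl_C)
  then have "bracket (mat_unit b a) (mat_unit a b) = 0"
    using mat_unit_in_sl_C[of b a] ab by (simp add: Z_def)
  moreover have "bracket (mat_unit b a) (mat_unit a b) $ b $ b = 1" using ab by simp
  ultimately show False by simp
qed

section \<open>Subfields of C and their embeddings\<close>

context
  fixes E :: "complex set"
  assumes E: "subfield_C E"
begin

lemma subfield_C_0: "0 \<in> E" and subfield_C_1: "1 \<in> E"
  and subfield_C_add: "x \<in> E \<Longrightarrow> y \<in> E \<Longrightarrow> x + y \<in> E"
  and subfield_C_mult: "x \<in> E \<Longrightarrow> y \<in> E \<Longrightarrow> x * y \<in> E"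
  and subfield_C_uminus: "x \<in> E \<Longrightarrow> - x \<in> E"
  and subfield_C_inverse: "x \<in> E \<Longrightarrow> inverse x \<in> E"
  using E by (auto simp: subfield_C_def)

lemma subfield_C_diff: "x \<in> E \<Longrightarrow> y \<in> E \<Longrightarrow> x - y \<in> E"
  using subfield_C_add subfield_C_uminus by (metis diff_conv_add_uminus)

lemma subfield_C_sum: "(\<And>a. a \<in> A \<Longrightarrow> f a \<in> E) \<Longrightarrow> sum f A \<in> E"
  by (induct A rule: infinite_finite_induct) (auto intro: subfield_C_add subfield_C_0)

lemma subfield_C_prod: "(\<And>a. a \<in> A \<Longrightarrow> f a \<in> E) \<Longrightarrow> prod f A \<in> E"
  by (induct A rule: infinite_finite_induct) (auto intro: subfield_C_mult subfield_C_1)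

lemma subfield_C_of_nat: "of_nat n \<in> E"
  by (induct n) (auto intro: subfield_C_add subfield_C_0 subfield_C_1)

lemma subfield_C_of_int: "of_int z \<in> E"
  by (cases z rule: int_cases2) (auto intro: subfield_C_uminus subfield_C_of_nat)

lemma subfield_C_of_rat: "of_rat q \<in> E"
proof (cases q)
  case (Fract a b)
  then have "(of_rat q :: complex) = of_int a * inverse (of_int b)"
    by (simp add: of_rat_rat divide_inverse)
  then show ?thesis by (simp add: subfield_C_mult subfield_C_inverse subfield_C_of_int)
qed

context
  fixes \<sigma> :: "complex \<Rightarrow> complex"
  assumes \<sigma>: "field_hom_on E \<sigma>"
begin

lemma field_hom_on_1: "\<sigma> 1 = 1"
  and field_hom_on_add: "x \<in> E \<Longrightarrow> y \<in> E \<Longrightarrow> \<sigma> (x + y) = \<sigma> x + \<sigma> y"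
  and field_hom_on_mult: "x \<in> E \<Longrightarrow> y \<in> E \<Longrightarrow> \<sigma> (x * y) = \<sigma> x * \<sigma> y"
  using \<sigma> by (auto simp: field_hom_on_def)

lemma field_hom_on_0: "\<sigma> 0 = 0"
  using field_hom_on_add[OF subfield_C_0 subfield_C_0] by simp

lemma field_hom_on_uminus: "x \<in> E \<Longrightarrow> \<sigma> (- x) = - \<sigma> x"
  using field_hom_on_add[of x "- x"] subfield_C_uminus field_hom_on_0
  by (simp add: eq_neg_iff_add_eq_0 add.commute)

lemma field_hom_on_diff: "x \<in> E \<Longrightarrow> y \<in> E \<Longrightarrow> \<sigma> (x - y) = \<sigma> x - \<sigma> y"
  using field_hom_on_add[of x "- y"] field_hom_on_uminus[of y] subfield_C_uminus by simp

lemma field_hom_on_sum: "(\<And>a. a \<in> A \<Longrightarrow> f a \<in> E) \<Longrightarrow> \<sigma> (sum f A) = (\<Sum>a\<in>A. \<sigma> (f a))"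
  by (induct A rule: infinite_finite_induct)
    (auto simp: field_hom_on_0 field_hom_on_add subfield_C_sum)

lemma field_hom_on_prod: "(\<And>a. a \<in> A \<Longrightarrow> f a \<in> E) \<Longrightarrow> \<sigma> (prod f A) = (\<Prod>a\<in>A. \<sigma> (f a))"
  by (induct A rule: infinite_finite_induct)
    (auto simp: field_hom_on_1 field_hom_on_mult subfield_C_prod)

lemma field_hom_on_of_nat: "\<sigma> (of_nat n) = of_nat n"
  by (induct n) (auto simp: field_hom_on_0 field_hom_on_1 field_hom_on_add subfield_C_of_nat subfield_C_1)

lemma field_hom_on_of_int: "\<sigma> (of_int z) = of_int z"
  by (cases z rule: int_cases2) (auto simp: field_hom_on_uminus field_hom_on_of_nat subfield_C_of_nat)

lemma field_hom_on_of_rat: "\<sigma> (of_rat q) = of_rat q"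
proof (cases q)
  case (Fract a b)
  then have "\<sigma> (of_rat q) * of_int b = of_int a"
    using field_hom_on_mult[OF subfield_C_of_rat subfield_C_of_int, of q b]
    by (simp add: of_rat_rat field_hom_on_of_int)
  then show ?thesis using Fract by (simp add: of_rat_rat field_simps)
qed

end
end

lemma aut_field_hom_on: "\<sigma> \<in> aut E \<Longrightarrow> field_hom_on E \<sigma>"
  by (simp add: aut_def)

lemma aut_mem: "\<sigma> \<in> aut E \<Longrightarrow> x \<in> E \<Longrightarrow> \<sigma> x \<in> E"
  by (auto simp: aut_def bij_betw_def)

section \<open>Matrices over a subfield and entrywise embeddings\<close>

interpretation qs: vector_space "qscale :: rat \<Rightarrow> complex^'n^'n \<Rightarrow> complex^'n^'n"
  by unfold_locales (simp_all add: vec_eq_iff qscale_def algebra_simps of_rat_add of_rat_mult)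

interpretation qc: vector_space qscalec
  by unfold_locales (simp_all add: qscalec_def algebra_simps of_rat_add of_rat_mult)

definition mat_over :: "complex set \<Rightarrow> (complex^'n^'n) set" where
  "mat_over E = {X. \<forall>i j. X$i$j \<in> E}"

lemma qscale_nth [simp]: "qscale q A $ i $ j = of_rat q * A $ i $ j"
  by (simp add: qscale_def)

lemma apply_emb_nth [simp]: "apply_emb \<sigma> A $ i $ j = \<sigma> (A $ i $ j)"
  by (simp add: apply_emb_def)

lemma sl_E_subset_mat_over: "sl_E E \<subseteq> mat_over E"
  by (auto simp: sl_E_def mat_over_def)

lemma mat_over_span_finite:
  assumes "finite_over_Q E"
  obtains F where "finite F" "(mat_over E :: (complex^'n^'n) set) \<subseteq> qs.span F"
proof -
  obtain B where B: "finite B" "qc.span B = E"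
    using assms by (auto simp: finite_over_Q_def)
  define g :: "'n \<Rightarrow> 'n \<Rightarrow> complex \<Rightarrow> complex^'n^'n" where "g i j z = cscale z (mat_unit i j)" for i j z
  have g: "module_hom qscalec qscale (g i j)" for i j
    by unfold_locales (simp_all add: g_def vec_eq_iff qscalec_def algebra_simps of_rat_add of_rat_mult)
  define F where "F = (\<Union>i j. g i j ` B)"
  have "X \<in> qs.span F" if X: "X \<in> mat_over E" for X
  proof -
    have "g i j (X$i$j) \<in> qs.span (g i j ` B)" for i j
      using X B(2) module_hom.span_image[OF g[of i j], of B] by (auto simp: mat_over_def)
    then have "g i j (X$i$j) \<in> qs.span F" for i j
      using qs.span_mono[of "g i j ` B" F] by (auto simp: F_def)
    then have "(\<Sum>i\<in>UNIV. \<Sum>j\<in>UNIV. g i j (X$i$j)) \<in> qs.span F"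
      by (intro qs.span_sum)
    moreover have "X = (\<Sum>i\<in>UNIV. \<Sum>j\<in>UNIV. g i j (X$i$j))"
      unfolding g_def by (rule matrix_eq_sum_mat_units)
    ultimately show ?thesis by simp
  qed
  moreover have "finite F" using B(1) by (simp add: F_def)
  ultimately show ?thesis using that by blast
qed

context
  fixes E :: "complex set" and \<sigma> :: "complex \<Rightarrow> complex"
  assumes E: "subfield_C E" and \<sigma>: "field_hom_on E \<sigma>"
begin

lemma apply_emb_0: "apply_emb \<sigma> 0 = 0"
  by (simp add: vec_eq_iff field_hom_on_0[OF E \<sigma>])

lemma apply_emb_add:
  "X \<in> mat_over E \<Longrightarrow> Y \<in> mat_over E \<Longrightarrow> apply_emb \<sigma> (X + Y) = apply_emb \<sigma> X + apply_emb \<sigma> Y"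
  by (simp add: vec_eq_iff mat_over_def field_hom_on_add[OF E \<sigma>])

lemma apply_emb_qscale:
  "X \<in> mat_over E \<Longrightarrow> apply_emb \<sigma> (qscale q X) = cscale (of_rat q) (apply_emb \<sigma> X)"
  by (simp add: vec_eq_iff mat_over_def field_hom_on_mult[OF E \<sigma>] subfield_C_of_rat[OF E]
      field_hom_on_of_rat[OF E \<sigma>])

lemma apply_emb_mult:
  "X \<in> mat_over E \<Longrightarrow> Y \<in> mat_over E \<Longrightarrow> apply_emb \<sigma> (X ** Y) = apply_emb \<sigma> X ** apply_emb \<sigma> Y"
  by (simp add: vec_eq_iff mat_over_def matrix_matrix_mult_def field_hom_on_sum[OF E \<sigma>]
      field_hom_on_mult[OF E \<sigma>] subfield_C_mult[OF E])

lemma apply_emb_bracket: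
  assumes "X \<in> mat_over E" "Y \<in> mat_over E"
  shows "apply_emb \<sigma> (bracket X Y) = bracket (apply_emb \<sigma> X) (apply_emb \<sigma> Y)"
proof -
  have "X ** Y \<in> mat_over E" "Y ** X \<in> mat_over E"
    using assms by (auto simp: mat_over_def matrix_matrix_mult_def intro!: subfield_C_sum[OF E] subfield_C_mult[OF E])
  then show ?thesis
    using assms by (simp add: vec_eq_iff bracket_def mat_over_def field_hom_on_diff[OF E \<sigma>] apply_emb_mult[symmetric])
qed

lemma apply_emb_in_sl_C: "X \<in> sl_E E \<Longrightarrow> apply_emb \<sigma> X \<in> sl_C"
  by (simp add: sl_E_def sl_C_def trace_def field_hom_on_sum[OF E \<sigma>, symmetric] field_hom_on_0[OF E \<sigma>])

end

lemma apply_emb_aut_in_sl_E: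
  "subfield_C E \<Longrightarrow> \<sigma> \<in> aut E \<Longrightarrow> X \<in> sl_E E \<Longrightarrow> apply_emb \<sigma> X \<in> sl_E E"
  using apply_emb_in_sl_C[OF _ aut_field_hom_on] by (auto simp: sl_E_def sl_C_def aut_mem)

section \<open>Subalgebras of a product of copies of sl_n(C)\<close>

definition fscale :: "complex \<Rightarrow> ('i \<Rightarrow> complex^'n^'n) \<Rightarrow> 'i \<Rightarrow> complex^'n^'n" where
  "fscale c x = (\<lambda>i. cscale c (x i))"

definition pbracket :: "('i \<Rightarrow> complex^'n^'n) \<Rightarrow> ('i \<Rightarrow> complex^'n^'n) \<Rightarrow> 'i \<Rightarrow> complex^'n^'n" where
  "pbracket x y = (\<lambda>i. bracket (x i) (y i))"

interpretation fs: vector_space "fscale :: complex \<Rightarrow> ('i \<Rightarrow> complex^'n^'n) \<Rightarrow> _"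
  by unfold_locales (simp_all add: vec_eq_iff fscale_def fun_eq_iff algebra_simps)

lemma pbracket_0 [simp]: "pbracket 0 y = 0" "pbracket x 0 = 0"
  by (simp_all add: pbracket_def fun_eq_iff)

lemma pbracket_add_left: "pbracket (x + x') y = pbracket x y + pbracket x' y"
  and pbracket_add_right: "pbracket x (y + y') = pbracket x y + pbracket x y'"
  by (simp_all add: pbracket_def fun_eq_iff bracket_add_left bracket_add_right)

lemma pbracket_fscale_left: "pbracket (fscale c x) y = fscale c (pbracket x y)"
  and pbracket_fscale_right: "pbracket x (fscale c y) = fscale c (pbracket x y)"
  by (simp_all add: pbracket_def fscale_def fun_eq_iff bracket_cscale_left bracket_cscale_right)

lemma fs_span_pbracket_closed:
  assumes B: "\<And>x y. x \<in> B \<Longrightarrow> y \<in> B \<Longrightarrow> pbracket x y \<in> fs.span B"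
    and x: "x \<in> fs.span B" and y: "y \<in> fs.span B"
  shows "pbracket x y \<in> fs.span B"
proof -
  have sub: "fs.subspace {v. pbracket u v \<in> fs.span B}" "fs.subspace {v. pbracket v w \<in> fs.span B}" for u w
    by (auto simp: fs.subspace_def pbracket_add_left pbracket_add_right pbracket_fscale_left
        pbracket_fscale_right fs.span_zero fs.span_add fs.span_scale)
  have base: "pbracket u y \<in> fs.span B" if "u \<in> B" for u
    using y sub(1) by (rule fs.span_induct) (use B that in simp)
  show ?thesis
    using x sub(2)[of y] by (rule fs.span_induct) (use base in simp)
qed

lemma module_hom_eval: "module_hom fscale cscale (\<lambda>x. x i)"
  by unfold_locales (simp_all add: fscale_def)

lemma sum_fun_apply: "(sum f A) x = (\<Sum>a\<in>A. f a x)"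
  by (induct A rule: infinite_finite_induct) auto

locale sl_product_subalgebra =
  fixes S :: "'i set" and L :: "('i \<Rightarrow> complex^'n^'n) set"
  assumes two_le_card: "2 \<le> CARD('n)"
    and subspace: "fs.subspace L"
    and pbracket_closed: "x \<in> L \<Longrightarrow> y \<in> L \<Longrightarrow> pbracket x y \<in> L"
    and values_in_sl_C: "x \<in> L \<Longrightarrow> i \<in> S \<Longrightarrow> x i \<in> sl_C"
    and onto_single: "i \<in> S \<Longrightarrow> a \<in> sl_C \<Longrightarrow> \<exists>x\<in>L. x i = a"
    and onto_pair: "i \<in> S \<Longrightarrow> j \<in> S \<Longrightarrow> i \<noteq> j \<Longrightarrow> a \<in> sl_C \<Longrightarrow> b \<in> sl_C
      \<Longrightarrow> \<exists>x\<in>L. x i = a \<and> x j = b"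
begin

definition onto_on :: "'i set \<Rightarrow> bool" where
  "onto_on T \<longleftrightarrow> (\<forall>g. (\<forall>i\<in>T. g i \<in> sl_C) \<longrightarrow> (\<exists>x\<in>L. \<forall>i\<in>T. x i = g i))"

definition kernel_values :: "'i set \<Rightarrow> 'i \<Rightarrow> (complex^'n^'n) set" where
  "kernel_values T m = (\<lambda>x. x m) ` {x \<in> L. \<forall>i\<in>T. x i = 0}"

lemma sl_ideal_kernel_values:
  assumes m: "m \<in> S"
  shows "sl_ideal (kernel_values T m)"
  unfolding sl_ideal_def
proof (intro conjI ballI)
  have "fs.subspace {x \<in> L. \<forall>i\<in>T. x i = 0}"
    using subspace by (auto simp: fs.subspace_def fscale_def)
  then show "cs.subspace (kernel_values T m)"
    unfolding kernel_values_def by (rule module_hom.subspace_image[OF module_hom_eval])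
  show "kernel_values T m \<subseteq> sl_C"
    using values_in_sl_C m by (auto simp: kernel_values_def)
  fix z y :: "complex^'n^'n"
  assume "z \<in> sl_C" "y \<in> kernel_values T m"
  then obtain w x where "w \<in> L" "w m = z" "x \<in> L" "\<forall>i\<in>T. x i = 0" "y = x m"
    using onto_single[OF m] unfolding kernel_values_def by blast
  then show "bracket z y \<in> kernel_values T m"
    using pbracket_closed[of w x] unfolding kernel_values_def
    by (intro image_eqI[of _ _ "pbracket w x"]) (auto simp: pbracket_def)
qed

lemma kernel_values_trivial_value_0_single:
  assumes T: "T \<subseteq> S" "m \<in> S" "m \<notin> T" and triv: "kernel_values T m \<subseteq> {0}"
    and w: "w \<in> L" "t \<in> T" "\<forall>i\<in>T - {t}. w i = 0"
  shows "w m = 0"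
proof -
  have "bracket (w m) y = 0" if y: "y \<in> sl_C" for y
  proof -
    have "t \<in> S" "t \<noteq> m" using T w by auto
    then obtain x where x: "x \<in> L" "x t = 0" "x m = y"
      using onto_pair[of t m 0 y] T y zero_in_sl_C by blast
    have "\<forall>i\<in>T. pbracket w x i = 0"
      using w x by (metis DiffI bracket_0 pbracket_def singletonD)
    then have "pbracket w x m \<in> kernel_values T m"
      using pbracket_closed[OF w(1) x(1)] by (auto simp: kernel_values_def)
    then show ?thesis using triv x by (auto simp: pbracket_def)
  qed
  then show ?thesis
    using sl_C_centre_trivial[OF two_le_card] values_in_sl_C[OF w(1)] T by blast
qed

lemma kernel_values_trivial_value_0:
  assumes T: "finite T" "T \<subseteq> S" "m \<in> S" "m \<notin> T" and onto: "onto_on T"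
    and triv: "kernel_values T m \<subseteq> {0}" and x: "x \<in> L"
  shows "x m = 0"
proof -
  have "\<forall>t\<in>T. \<exists>w\<in>L. \<forall>i\<in>T. w i = (if i = t then x t else 0)"
  proof
    fix t assume "t \<in> T"
    then have "\<forall>i\<in>T. (if i = t then x t else 0) \<in> sl_C"
      using values_in_sl_C[OF x] T zero_in_sl_C by auto
    then show "\<exists>w\<in>L. \<forall>i\<in>T. w i = (if i = t then x t else 0)"
      using onto by (auto simp: onto_on_def)
  qed
  then obtain W where W: "\<And>t. t \<in> T \<Longrightarrow> W t \<in> L"
    "\<And>t i. t \<in> T \<Longrightarrow> i \<in> T \<Longrightarrow> W t i = (if i = t then x t else 0)"
    by metis
  have "W t m = 0" if "t \<in> T" for t
    using kernel_values_trivial_value_0_single[OF T(2-4) triv W(1)[OF that] that] W(2) that by auto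
  then have Wm: "(\<Sum>t\<in>T. W t) m = 0" by (simp add: sum_fun_apply)
  have "(\<Sum>t\<in>T. W t) i = x i" if "i \<in> T" for i
    using that T(1) by (simp add: sum_fun_apply W(2))
  then have "\<forall>i\<in>T. (x - (\<Sum>t\<in>T. W t)) i = 0" by simp
  moreover have "x - (\<Sum>t\<in>T. W t) \<in> L"
    using W(1) x by (intro fs.subspace_diff[OF subspace] fs.subspace_sum[OF subspace])
  ultimately have "(x - (\<Sum>t\<in>T. W t)) m \<in> kernel_values T m"
    unfolding kernel_values_def by blast
  then show ?thesis using triv Wm by auto
qed

(* The values at m of the elements of L vanishing on T form an ideal of sl_n(C).  Were it zero,
   pair surjectivity and the trivial centre would force every element of L to vanish at m. *)

lemma kernel_values_eq_sl_C:
  assumes T: "finite T" "T \<subseteq> S" "m \<in> S" "m \<notin> T" and onto: "onto_on T"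
  shows "kernel_values T m = sl_C"
proof (cases "kernel_values T m \<subseteq> {0}")
  case True
  obtain a b :: 'n where "a \<noteq> b" using exists_neq_if_two_le_card[OF two_le_card] by blast
  then obtain x where "x \<in> L" "x m = mat_unit a b"
    using onto_single[OF T(3) mat_unit_in_sl_C] by blast
  then show ?thesis
    using kernel_values_trivial_value_0[OF T onto True] mat_unit_neq_0 by metis
next
  case False
  then show ?thesis
    using sl_ideal_eq_sl_C[OF sl_ideal_kernel_values[OF T(3)]] by blast
qed

lemma onto_on_insert:
  assumes T: "finite T" "T \<subseteq> S" "m \<in> S" "m \<notin> T" and onto: "onto_on T"
  shows "onto_on (insert m T)"
  unfolding onto_on_def
proof (intro allI impI)
  fix g :: "'i \<Rightarrow> complex^'n^'n" assume g: "\<forall>i\<in>insert m T. g i \<in> sl_C"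
  then obtain x where x: "x \<in> L" "\<forall>i\<in>T. x i = g i"
    using onto by (auto simp: onto_on_def)
  have "g m - x m \<in> sl_C"
    using g values_in_sl_C[OF x(1) T(3)] by (simp add: diff_in_sl_C)
  then have "g m - x m \<in> kernel_values T m" using kernel_values_eq_sl_C[OF T onto] by simp
  then obtain x' where x': "x' \<in> L" "\<forall>i\<in>T. x' i = 0" "x' m = g m - x m"
    unfolding kernel_values_def by auto
  have "x + x' \<in> L" using x(1) x'(1) by (rule fs.subspace_add[OF subspace])
  moreover have "\<forall>i\<in>insert m T. (x + x') i = g i" using x x' by auto
  ultimately show "\<exists>x\<in>L. \<forall>i\<in>insert m T. x i = g i" by blast
qed

lemma onto_on_subset: "finite T \<Longrightarrow> T \<subseteq> S \<Longrightarrow> onto_on T"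
proof (induct T rule: finite_induct)
  case empty
  show ?case using fs.subspace_0[OF subspace] by (auto simp: onto_on_def)
next
  case (insert m T)
  then show ?case by (intro onto_on_insert) auto
qed

end

section \<open>Dimension counts\<close>

interpretation cs2: vector_space "cscale2 :: complex \<Rightarrow> (complex^'n^'n) \<times> (complex^'n^'n) \<Rightarrow> _"
  by unfold_locales (simp_all add: vec_eq_iff cscale2_def cscale_def algebra_simps)

definition sl_unit :: "'n \<Rightarrow> 'n \<times> 'n \<Rightarrow> complex^'n^'n" where
  "sl_unit a = (\<lambda>(i, j). if i = j then mat_unit i i - mat_unit a a else mat_unit i j)"

definition supported_unit :: "'n \<Rightarrow> 'i \<times> ('n \<times> 'n) \<Rightarrow> 'i \<Rightarrow> complex^'n^'n" where
  "supported_unit a t = (\<lambda>i. if i = fst t then sl_unit a (snd t) else 0)"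

lemma sl_unit_in_sl_C: "sl_unit a p \<in> sl_C"
  by (cases p) (auto simp: sl_unit_def mat_unit_in_sl_C mat_unit_diff_in_sl_C)

lemma supported_unit_nth:
  assumes "t \<in> S \<times> (UNIV - {(a, a)})" "(i', j') \<noteq> (a, a)"
  shows "supported_unit a t i $ i' $ j' = (if t = (i, (i', j')) then 1 else 0)"
  using assms by (cases t) (auto simp: supported_unit_def sl_unit_def)

lemma inj_on_supported_unit: "inj_on (supported_unit a) (S \<times> (UNIV - {(a, a)}))"
proof
  fix t t' assume t: "t \<in> S \<times> (UNIV - {(a, a)})" "t' \<in> S \<times> (UNIV - {(a, a)})"
    and eq: "supported_unit a t = supported_unit a t'"
  obtain i i' j' where tt: "t = (i, (i', j'))" by (cases t) auto
  have P: "(i', j') \<noteq> (a, a)" using t(1) tt by auto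
  have "supported_unit a t' i $ i' $ j' = supported_unit a t i $ i' $ j'" using eq by simp
  also have "\<dots> = 1" using supported_unit_nth[OF t(1) P] tt by simp
  finally show "t = t'" using supported_unit_nth[OF t(2) P] tt by (simp split: if_splits)
qed

lemma independent_supported_units:
  assumes S: "finite S"
  shows "fs.independent (supported_unit a ` (S \<times> (UNIV - {(a, a)})))"
proof (rule fs.independent_if_scalars_zero)
  let ?I = "S \<times> (UNIV - {(a, a)})"
  show "finite (supported_unit a ` ?I)" using S by simp
  fix c v assume sum0: "(\<Sum>x\<in>supported_unit a ` ?I. fscale (c x) x) = 0" and v: "v \<in> supported_unit a ` ?I"
  then obtain i i' j' where t: "(i, (i', j')) \<in> ?I" "v = supported_unit a (i, (i', j'))" by auto
  have "0 = (\<Sum>t\<in>?I. fscale (c (supported_unit a t)) (supported_unit a t)) i $ i' $ j'"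
    using sum0 by (simp add: sum.reindex[OF inj_on_supported_unit])
  also have "\<dots> = (\<Sum>t\<in>?I. c (supported_unit a t) * supported_unit a t i $ i' $ j')"
    by (simp add: sum_fun_apply fscale_def)
  also have "\<dots> = (\<Sum>t\<in>?I. if t = (i, (i', j')) then c (supported_unit a t) else 0)"
    using t(1) by (intro sum.cong refl) (simp add: supported_unit_nth)
  also have "\<dots> = c v" using t S by simp
  finally show "c v = 0" by simp
qed

lemma card_le_if_span_contains_supported:
  fixes B :: "('i \<Rightarrow> complex^'n^'n) set"
  assumes S: "finite S" and B: "finite B"
    and supported: "\<And>g. (\<forall>i\<in>S. g i \<in> sl_C) \<Longrightarrow> (\<forall>i. i \<notin> S \<longrightarrow> g i = 0) \<Longrightarrow> g \<in> fs.span B"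
  shows "card S * (CARD('n)^2 - 1) \<le> card B"
proof -
  fix a :: 'n
  have "supported_unit a t \<in> fs.span B" if "t \<in> S \<times> (UNIV - {(a, a)})" for t
    using that sl_unit_in_sl_C[of a "snd t"] zero_in_sl_C by (intro supported) (auto simp: supported_unit_def)
  then have "supported_unit a ` (S \<times> (UNIV - {(a, a)})) \<subseteq> fs.span B" by blast
  then have "card (supported_unit a ` (S \<times> (UNIV - {(a, a)}))) \<le> card B"
    using fs.independent_span_bound[OF B independent_supported_units[OF S]] by blast
  then show ?thesis
    using card_image[OF inj_on_supported_unit[of a S]]
    by (simp add: card_cartesian_product card_Diff_singleton card_UNIV power2_eq_square)
qed

(* emb_family S X is the image of X (x) 1 in the product of the factors sl_C(V_rho), rho in S. *)

definition emb_family :: "(complex \<Rightarrow> complex) set \<Rightarrow> complex^'n^'n \<Rightarrow> (complex \<Rightarrow> complex) \<Rightarrow> complex^'n^'n"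
  where "emb_family S X = (\<lambda>\<rho>. if \<rho> \<in> S then apply_emb \<rho> X else 0)"

context
  fixes E :: "complex set" and S :: "(complex \<Rightarrow> complex) set" and K :: "(complex^'n^'n) set"
  assumes E: "subfield_C E" and S: "\<And>\<rho>. \<rho> \<in> S \<Longrightarrow> field_hom_on E \<rho>" and K: "K \<subseteq> sl_E E"
begin

lemma emb_family_span_values:
  assumes "x \<in> fs.span (emb_family S ` K)"
  shows "\<rho> \<in> S \<Longrightarrow> x \<rho> \<in> sl_C" and "\<rho> \<notin> S \<Longrightarrow> x \<rho> = 0"
proof -
  define Q :: "((complex \<Rightarrow> complex) \<Rightarrow> complex^'n^'n) set"
    where "Q = {x. \<forall>\<rho>. (\<rho> \<in> S \<longrightarrow> x \<rho> \<in> sl_C) \<and> (\<rho> \<notin> S \<longrightarrow> x \<rho> = 0)}"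
  have "fs.subspace Q"
    using subspace_sl_C by (auto simp: fs.subspace_def cs.subspace_def Q_def fscale_def)
  moreover have "emb_family S ` K \<subseteq> Q"
    using K by (auto simp: Q_def emb_family_def intro!: apply_emb_in_sl_C[OF E S])
  ultimately have "x \<in> Q" using assms fs.span_minimal by blast
  then show "\<rho> \<in> S \<Longrightarrow> x \<rho> \<in> sl_C" and "\<rho> \<notin> S \<Longrightarrow> x \<rho> = 0"
    by (auto simp: Q_def)
qed

lemma emb_family_0: "emb_family S 0 = 0"
  by (simp add: emb_family_def fun_eq_iff apply_emb_0[OF E S])

lemma mem_K_mat_over: "X \<in> K \<Longrightarrow> X \<in> mat_over E"
  using K sl_E_subset_mat_over by blast

lemma emb_family_add: "X \<in> K \<Longrightarrow> Y \<in> K \<Longrightarrow> emb_family S (X + Y) = emb_family S X + emb_family S Y"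
  by (simp add: emb_family_def fun_eq_iff apply_emb_add[OF E S] mem_K_mat_over)

lemma emb_family_qscale: "X \<in> K \<Longrightarrow> emb_family S (qscale q X) = fscale (of_rat q) (emb_family S X)"
  by (simp add: emb_family_def fun_eq_iff fscale_def apply_emb_qscale[OF E S] mem_K_mat_over)

lemma emb_family_bracket:
  assumes "X \<in> K" "Y \<in> K"
  shows "emb_family S (bracket X Y) = pbracket (emb_family S X) (emb_family S Y)"
  using assms by (simp add: emb_family_def pbracket_def fun_eq_iff apply_emb_bracket[OF E S] mem_K_mat_over)

lemma P1_eq_eval_emb_span: "\<sigma> \<in> S \<Longrightarrow> P1 \<sigma> K = (\<lambda>x. x \<sigma>) ` fs.span (emb_family S ` K)"
proof -
  assume "\<sigma> \<in> S"
  from module_hom.span_image[OF module_hom_eval[of \<sigma>], of "emb_family S ` K"]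
  show ?thesis using \<open>\<sigma> \<in> S\<close> by (simp add: P1_def emb_family_def image_image)
qed

lemma P2_eq_eval_emb_span:
  "\<sigma> \<in> S \<Longrightarrow> \<tau> \<in> S \<Longrightarrow> P2 \<sigma> \<tau> K = (\<lambda>x. (x \<sigma>, x \<tau>)) ` fs.span (emb_family S ` K)"
proof -
  assume "\<sigma> \<in> S" "\<tau> \<in> S"
  have "module_hom fscale cscale2 (\<lambda>x. (x \<sigma>, x \<tau>))"
    by unfold_locales (simp_all add: fscale_def cscale2_def)
  from module_hom.span_image[OF this, of "emb_family S ` K"]
  show ?thesis using \<open>\<sigma> \<in> S\<close> \<open>\<tau> \<in> S\<close> by (simp add: P2_def emb_family_def image_image)
qed

lemma sl_product_subalgebra_emb_span:
  assumes n: "2 \<le> CARD('n)" and closed: "\<forall>X\<in>K. \<forall>Y\<in>K. bracket X Y \<in> K"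
    and single: "\<forall>\<sigma>\<in>S. P1 \<sigma> K = sl_C"
    and pair: "\<forall>\<sigma>\<in>S. \<forall>\<tau>\<in>S. \<sigma> \<noteq> \<tau> \<longrightarrow> P2 \<sigma> \<tau> K = sl_C \<times> sl_C"
  shows "sl_product_subalgebra S (fs.span (emb_family S ` K))"
proof
  show "2 \<le> CARD('n)" by (rule n)
  show "fs.subspace (fs.span (emb_family S ` K))" by (rule fs.subspace_span)
  have "pbracket u v \<in> fs.span (emb_family S ` K)"
    if uv: "u \<in> emb_family S ` K" "v \<in> emb_family S ` K" for u v
  proof -
    obtain X Y where "X \<in> K" "Y \<in> K" "u = emb_family S X" "v = emb_family S Y"
      using uv by blast
    then have "pbracket u v = emb_family S (bracket X Y)" "bracket X Y \<in> K"
      using closed emb_family_bracket[of X Y] by auto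
    then show ?thesis by (simp add: fs.span_base)
  qed
  then show "pbracket x y \<in> fs.span (emb_family S ` K)"
    if "x \<in> fs.span (emb_family S ` K)" "y \<in> fs.span (emb_family S ` K)" for x y
    using fs_span_pbracket_closed that by blast
  show "x \<rho> \<in> sl_C" if "x \<in> fs.span (emb_family S ` K)" "\<rho> \<in> S" for x \<rho>
    using emb_family_span_values(1) that .
  show "\<exists>x\<in>fs.span (emb_family S ` K). x \<sigma> = a" if "\<sigma> \<in> S" "a \<in> sl_C" for \<sigma> a
  proof -
    have "a \<in> P1 \<sigma> K" using that single by simp
    then show ?thesis using P1_eq_eval_emb_span[OF that(1)] by auto
  qed
  show "\<exists>x\<in>fs.span (emb_family S ` K). x \<sigma> = a \<and> x \<tau> = b"
    if "\<sigma> \<in> S" "\<tau> \<in> S" "\<sigma> \<noteq> \<tau>" "a \<in> sl_C" "b \<in> sl_C" for \<sigma> \<tau> a b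
  proof -
    have "(a, b) \<in> P2 \<sigma> \<tau> K" using that pair by simp
    then show ?thesis using P2_eq_eval_emb_span[OF that(1,2)] by auto
  qed
qed

lemma emb_span_subset_finite_span:
  assumes Q: "finite_over_Q E" and subspace: "qs.subspace K"
  obtains B where "finite B" "card B \<le> qdim K" "fs.span (emb_family S ` K) \<subseteq> fs.span B"
proof -
  obtain F where F: "finite F" "(mat_over E :: (complex^'n^'n) set) \<subseteq> qs.span F"
    using mat_over_span_finite[OF Q] by blast
  obtain BK where BK: "BK \<subseteq> K" "qs.independent BK" "K \<subseteq> qs.span BK"
    using qs.maximal_independent_subset[of K] by blast
  have "finite BK" using qs.independent_span_bound[OF F(1) BK(2)] BK(1) F(2) mem_K_mat_over by blast
  have "card BK = qdim K"
    using qs.basis_card_eq_dim[OF BK(1,3,2)] by (simp add: qdim_def)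
  have "qs.subspace {X \<in> K. emb_family S X \<in> fs.span (emb_family S ` BK)}"
    unfolding qs.subspace_def
    using qs.subspace_0[OF subspace] qs.subspace_add[OF subspace] qs.subspace_scale[OF subspace]
    by (simp add: emb_family_0 emb_family_add emb_family_qscale fs.span_zero fs.span_add fs.span_scale)
  then have "qs.span BK \<subseteq> {X \<in> K. emb_family S X \<in> fs.span (emb_family S ` BK)}"
    using BK(1) by (intro qs.span_minimal) (auto intro: fs.span_base)
  then have "fs.span (emb_family S ` K) \<subseteq> fs.span (emb_family S ` BK)"
    using BK(3) by (intro fs.span_minimal[OF _ fs.subspace_span]) auto
  moreover have "card (emb_family S ` BK) \<le> qdim K"
    using card_image_le[OF \<open>finite BK\<close>] \<open>card BK = qdim K\<close> by simp
  ultimately show ?thesis using that \<open>finite BK\<close> by blast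
qed

end

lemma card_mult_le_qdim:
  fixes K :: "(complex^'n^'n) set"
  assumes E: "subfield_C E" and Q: "finite_over_Q E" and K: "K \<subseteq> sl_E E" and lie: "lie_subalgebra_Q K"
    and S: "finite S" "\<And>\<rho>. \<rho> \<in> S \<Longrightarrow> field_hom_on E \<rho>" and n: "2 \<le> CARD('n)"
    and single: "\<forall>\<sigma>\<in>S. P1 \<sigma> K = sl_C"
    and pair: "\<forall>\<sigma>\<in>S. \<forall>\<tau>\<in>S. \<sigma> \<noteq> \<tau> \<longrightarrow> P2 \<sigma> \<tau> K = sl_C \<times> sl_C"
  shows "card S * (CARD('n)^2 - 1) \<le> qdim K"
proof -
  have K_subspace: "qs.subspace K" and closed: "\<forall>X\<in>K. \<forall>Y\<in>K. bracket X Y \<in> K"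
    using lie by (auto simp: lie_subalgebra_Q_def)
  interpret sl_product_subalgebra S "fs.span (emb_family S ` K)"
    using sl_product_subalgebra_emb_span[OF E S(2) K n closed single pair] .
  obtain B where B: "finite B" "card B \<le> qdim K" "fs.span (emb_family S ` K) \<subseteq> fs.span B"
    using emb_span_subset_finite_span[OF E S(2) K Q K_subspace] by blast
  have "g \<in> fs.span B" if g: "\<forall>i\<in>S. g i \<in> sl_C" "\<forall>i. i \<notin> S \<longrightarrow> g i = 0" for g
  proof -
    obtain x where x: "x \<in> fs.span (emb_family S ` K)" "\<forall>i\<in>S. x i = g i"
      using onto_on_subset[OF S(1) order_refl] g(1) by (auto simp: onto_on_def)
    have "x = g"
      using x g emb_family_span_values(2)[OF E S(2) K x(1)] by (auto simp: fun_eq_iff)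
    then show ?thesis using x(1) B(3) by blast
  qed
  then have "card S * (CARD('n)^2 - 1) \<le> card B"
    by (intro card_le_if_span_contains_supported S(1) B(1))
  with B(2) show ?thesis by linarith
qed

section \<open>Galois descent of the spanning condition\<close>

(* Pairs of matrices are coordinatised in C^(n x n x bool); the two corner vectors make up for
   the two trace conditions, turning "W spans sl_n x sl_n" into "a set of vectors spans C^N". *)

definition pair_coords :: "(complex^'n^'n) \<times> (complex^'n^'n) \<Rightarrow> complex^('n \<times> 'n \<times> bool)" where
  "pair_coords P = (\<chi> k. if snd (snd k) then snd P $ fst k $ fst (snd k) else fst P $ fst k $ fst (snd k))"

definition corner :: "bool \<Rightarrow> complex^('n::finite \<times> 'n \<times> bool)" where
  "corner b = axis (undefined, undefined, b) 1"

lemma pair_coords_nth [simp]: "pair_coords P $ (i, j, b) = (if b then snd P $ i $ j else fst P $ i $ j)"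
  by (simp add: pair_coords_def)

lemma corner_nth [simp]: "corner b $ (i, j, b') = (if i = undefined \<and> j = undefined \<and> b' = b then 1 else 0)"
  by (auto simp: corner_def axis_def)

lemma pair_coords_inject:
  assumes "pair_coords P = pair_coords Q"
  shows "P = Q"
proof -
  have "fst P $ i $ j = fst Q $ i $ j \<and> snd P $ i $ j = snd Q $ i $ j" for i j
    using arg_cong[OF assms, of "\<lambda>v. v $ (i, j, False)"] arg_cong[OF assms, of "\<lambda>v. v $ (i, j, True)"]
    by simp
  then show ?thesis by (simp add: prod_eq_iff vec_eq_iff)
qed

lemma span_pair_coords: "vec.span (pair_coords ` W) = pair_coords ` cs2.span W"
proof -
  have "module_hom cscale2 (*s) pair_coords"
    by unfold_locales (auto simp: vec_eq_iff cscale2_def cscale_def algebra_simps pair_coords_def)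
  then show ?thesis by (rule module_hom.span_image)
qed

lemma trace_diff_cscale_mat_unit: "trace (A - cscale k (mat_unit a a)) = trace A - k"
  by (simp add: trace_def sum_subtractf if_distrib[of "\<lambda>x. k * x"] cong: if_cong)

lemma sl_C_subset_span_corners:
  fixes W :: "((complex^'n^'n) \<times> (complex^'n^'n)) set"
  assumes W: "cs2.span W = sl_C \<times> sl_C"
  shows "vec.span (insert (corner False) (insert (corner True) (pair_coords ` W))) = UNIV"
proof -
  have "v \<in> vec.span (insert (corner False) (insert (corner True) (pair_coords ` W)))" for v :: "complex^('n \<times> 'n \<times> bool)"
  proof -
    define A B :: "complex^'n^'n" where "A = (\<chi> i j. v $ (i, j, False))" and "B = (\<chi> i j. v $ (i, j, True))"
    define A' B' where "A' = A - cscale (trace A) (mat_unit undefined undefined)"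
      and "B' = B - cscale (trace B) (mat_unit undefined undefined)"
    have "(A', B') \<in> cs2.span W"
      using W by (simp add: A'_def B'_def sl_C_def trace_diff_cscale_mat_unit)
    then have "pair_coords (A', B') \<in> vec.span (pair_coords ` W)"
      by (simp add: span_pair_coords)
    then have main: "pair_coords (A', B') \<in> vec.span (insert (corner False) (insert (corner True) (pair_coords ` W)))"
      by (rule vec.span_mono[THEN subsetD, rotated]) auto
    have "v = pair_coords (A', B') + trace A *s corner False + trace B *s corner True"
      unfolding vec_eq_iff by (auto simp: A'_def B'_def A_def B_def)
    then show ?thesis
      by (simp only:) (intro vec.span_add vec.span_scale main vec.span_base; simp)
  qed
  then show ?thesis by blast
qed

lemma span_eq_sl_C_if_span_corners:
  fixes W :: "((complex^'n^'n) \<times> (complex^'n^'n)) set"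
  assumes W: "W \<subseteq> sl_C \<times> sl_C"
    and full: "vec.span (insert (corner False) (insert (corner True) (pair_coords ` W))) = UNIV"
  shows "cs2.span W = sl_C \<times> sl_C"
proof
  have subspace: "cs2.subspace (sl_C \<times> sl_C)"
    using subspace_sl_C by (auto simp: cs2.subspace_def cs.subspace_def cscale2_def zero_prod_def)
  show sub: "cs2.span W \<subseteq> sl_C \<times> sl_C" using cs2.span_minimal[OF W subspace] .
  show "sl_C \<times> sl_C \<subseteq> cs2.span W"
  proof
    fix P :: "(complex^'n^'n) \<times> (complex^'n^'n)"
    assume P: "P \<in> sl_C \<times> sl_C"
    obtain A B where AB: "P = (A, B)" by (cases P)
    have "pair_coords P \<in> vec.span (insert (corner False) (insert (corner True) (pair_coords ` W)))"
      using full by simp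
    then obtain k1 where "pair_coords P - k1 *s corner False \<in> vec.span (insert (corner True) (pair_coords ` W))"
      unfolding vec.span_insert[of "corner False"] by blast
    then obtain k2 where "pair_coords P - k1 *s corner False - k2 *s corner True \<in> vec.span (pair_coords ` W)"
      unfolding vec.span_insert[of "corner True"] by blast
    then obtain Q where Q: "Q \<in> cs2.span W" "pair_coords Q = pair_coords P - k1 *s corner False - k2 *s corner True"
      by (auto simp: span_pair_coords)
    have "pair_coords P - k1 *s corner False - k2 *s corner True
        = pair_coords (A - cscale k1 (mat_unit undefined undefined), B - cscale k2 (mat_unit undefined undefined))"
      unfolding vec_eq_iff by (auto simp: AB)
    with Q(2) have Q_eq: "Q = (A - cscale k1 (mat_unit undefined undefined), B - cscale k2 (mat_unit undefined undefined))"
      by (intro pair_coords_inject) simp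
    then have "k1 = 0" "k2 = 0"
      using sub Q(1) P AB by (auto simp: sl_C_def trace_diff_cscale_mat_unit)
    then show "P \<in> cs2.span W" using Q Q_eq AB by (simp add: vec_eq_iff)
  qed
qed

lemma vec_span_eq_UNIV_iff_nonsingular:
  fixes V :: "(complex^'m) set"
  shows "vec.span V = UNIV \<longleftrightarrow> (\<exists>A::complex^'m^'m. (\<forall>k. A$k \<in> V) \<and> det A \<noteq> 0)"
proof
  assume full: "vec.span V = UNIV"
  obtain B where B: "B \<subseteq> V" "vec.independent B" "V \<subseteq> vec.span B"
    using vec.maximal_independent_subset[of V] by blast
  have span_B: "vec.span B = UNIV"
    using full vec.span_mono[OF B(3)] by (auto simp: vec.span_span)
  then have "card B = CARD('m)"
    using vec.basis_card_eq_dim[of B UNIV] B(2) by (simp add: card_cart_basis)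
  then obtain f where f: "bij_betw f (UNIV :: 'm set) B"
    using finite_same_card_bij[of "UNIV :: 'm set" B] vec.finiteI_independent[OF B(2)] by auto
  define A :: "complex^'m^'m" where "A = (\<chi> k. f k)"
  have "rows A = B"
    using f unfolding rows_def row_def A_def bij_betw_def by (auto simp: vec_eq_iff)
  then obtain A' :: "complex^'m^'m" where "A' ** A = mat 1"
    using matrix_left_invertible_span_rows_gen[of A] span_B by blast
  then have "det A \<noteq> 0"
    using matrix_left_right_inverse[of A A'] invertible_det_nz by (auto simp: invertible_def)
  moreover have "\<forall>k. A$k \<in> V" using f B(1) by (auto simp: A_def bij_betw_def)
  ultimately show "\<exists>A::complex^'m^'m. (\<forall>k. A$k \<in> V) \<and> det A \<noteq> 0" by blast
next
  assume "\<exists>A::complex^'m^'m. (\<forall>k. A$k \<in> V) \<and> det A \<noteq> 0"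
  then obtain A :: "complex^'m^'m" where A: "\<forall>k. A$k \<in> V" "det A \<noteq> 0" by blast
  then obtain A' where "A' ** A = mat 1" using invertible_det_nz by (auto simp: invertible_def)
  then have "vec.span (rows A) = UNIV" using matrix_left_invertible_span_rows_gen[of A] by blast
  moreover have "row k A = A $ k" for k by (simp add: row_def vec_eq_iff)
  then have "rows A \<subseteq> V" using A(1) by (auto simp: rows_def)
  ultimately show "vec.span V = UNIV" using vec.span_mono[of "rows A" V] by auto
qed

lemma det_map_field_hom:
  assumes E: "subfield_C E" and \<kappa>: "field_hom_on E \<kappa>" and A: "\<forall>i j. A$i$j \<in> E"
  shows "det (\<chi> i j. \<kappa> (A$i$j)) = \<kappa> (det A)"
proof -
  have prod_E: "(\<Prod>i\<in>UNIV. A $ i $ p i) \<in> E" for p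
    using A by (intro subfield_C_prod[OF E]) auto
  have "\<kappa> (det A) = (\<Sum>p\<in>{p. p permutes UNIV}. \<kappa> (of_int (sign p) * (\<Prod>i\<in>UNIV. A $ i $ p i)))"
    unfolding det_def using prod_E
    by (intro field_hom_on_sum[OF E \<kappa>]) (auto intro: subfield_C_mult[OF E] subfield_C_of_int[OF E])
  also have "\<dots> = (\<Sum>p\<in>{p. p permutes UNIV}. of_int (sign p) * (\<Prod>i\<in>UNIV. \<kappa> (A $ i $ p i)))"
    using prod_E A by (intro sum.cong refl)
      (simp add: field_hom_on_mult[OF E \<kappa>] subfield_C_of_int[OF E] field_hom_on_of_int[OF E \<kappa>]
        field_hom_on_prod[OF E \<kappa>])
  finally show ?thesis by (simp add: det_def)
qed

definition map_vec :: "(complex \<Rightarrow> complex) \<Rightarrow> complex^'m \<Rightarrow> complex^'m" where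
  "map_vec \<kappa> v = (\<chi> l. \<kappa> (v $ l))"

lemma vec_span_UNIV_descent:
  fixes V :: "(complex^'m) set"
  assumes E: "subfield_C E" and \<kappa>: "field_hom_on E \<kappa>" and V: "\<forall>v\<in>V. \<forall>l. v $ l \<in> E"
    and full: "vec.span (map_vec \<kappa> ` V) = UNIV"
  shows "vec.span V = UNIV"
proof -
  obtain A :: "complex^'m^'m" where A: "\<forall>k. A$k \<in> map_vec \<kappa> ` V" "det A \<noteq> 0"
    using full vec_span_eq_UNIV_iff_nonsingular by blast
  then have "\<forall>k. \<exists>r. r \<in> V \<and> A$k = map_vec \<kappa> r" by blast
  then obtain R where R: "\<And>k. R k \<in> V" "\<And>k. A$k = map_vec \<kappa> (R k)"
    by metis
  define M :: "complex^'m^'m" where "M = (\<chi> k. R k)"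
  have "A = (\<chi> i j. \<kappa> (M$i$j))" by (simp add: vec_eq_iff M_def R(2) map_vec_def)
  also have "det \<dots> = \<kappa> (det M)" using R(1) V by (intro det_map_field_hom[OF E \<kappa>]) (simp add: M_def)
  finally have "det M \<noteq> 0" using A(2) field_hom_on_0[OF E \<kappa>] by auto
  moreover have "\<forall>k. M$k \<in> V" using R(1) by (simp add: M_def)
  ultimately show ?thesis using vec_span_eq_UNIV_iff_nonsingular by blast
qed

lemma corners_pair_coords_entries:
  assumes E: "subfield_C E" and W: "W \<subseteq> sl_E E \<times> sl_E E"
    and v: "v \<in> insert (corner False) (insert (corner True) (pair_coords ` W))"
  shows "v $ l \<in> E"
proof -
  obtain i j b where l: "l = (i, j, b)" by (cases l)
  show ?thesis
  proof (cases "v \<in> pair_coords ` W")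
    case True
    then obtain A B where "(A, B) \<in> W" "v = pair_coords (A, B)" by auto
    then show ?thesis using W by (auto simp: l sl_E_def)
  next
    case False
    then show ?thesis using v subfield_C_0[OF E] subfield_C_1[OF E] by (auto simp: l)
  qed
qed

lemma P2_eq_sl_C_descent:
  fixes K :: "(complex^'n^'n) set"
  assumes E: "subfield_C E" and aut: "\<sigma> \<in> aut E" "\<tau> \<in> aut E" "\<kappa> \<in> aut E" and K: "K \<subseteq> sl_E E"
    and full: "P2 (\<kappa> \<circ> \<sigma>) (\<kappa> \<circ> \<tau>) K = sl_C \<times> sl_C"
  shows "P2 \<sigma> \<tau> K = sl_C \<times> sl_C"
proof -
  have \<kappa>: "field_hom_on E \<kappa>" using aut(3) by (rule aut_field_hom_on)
  define W where "W = (\<lambda>X. (apply_emb \<sigma> X, apply_emb \<tau> X)) ` K"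
  define V where "V = insert (corner False) (insert (corner True) (pair_coords ` W))"
  have W_E: "W \<subseteq> sl_E E \<times> sl_E E"
    using K apply_emb_aut_in_sl_E[OF E] aut by (auto simp: W_def)
  have W_sl: "W \<subseteq> sl_C \<times> sl_C"
    using W_E by (auto simp: sl_E_def sl_C_def)
  have corner_fixed: "map_vec \<kappa> (corner b) = corner b" for b :: bool
    by (simp add: vec_eq_iff map_vec_def field_hom_on_0[OF E \<kappa>] field_hom_on_1[OF E \<kappa>])
  have pair_coords_map: "map_vec \<kappa> (pair_coords (apply_emb \<sigma> X, apply_emb \<tau> X))
      = pair_coords (apply_emb (\<kappa> \<circ> \<sigma>) X, apply_emb (\<kappa> \<circ> \<tau>) X)" for X
    by (simp add: vec_eq_iff map_vec_def)
  have "map_vec \<kappa> ` V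
      = insert (corner False) (insert (corner True) (pair_coords ` (\<lambda>X. (apply_emb (\<kappa> \<circ> \<sigma>) X, apply_emb (\<kappa> \<circ> \<tau>) X)) ` K))"
    by (simp only: V_def W_def image_image image_insert corner_fixed pair_coords_map)
  also have "vec.span \<dots> = UNIV"
    using full unfolding P2_def by (rule sl_C_subset_span_corners)
  finally have span_map: "vec.span (map_vec \<kappa> ` V) = UNIV" .
  have V_E: "\<forall>v\<in>V. \<forall>l. v $ l \<in> E"
    using corners_pair_coords_entries[OF E W_E] by (simp add: V_def)
  have "vec.span V = UNIV" by (rule vec_span_UNIV_descent[OF E \<kappa> V_E span_map])
  then have "cs2.span W = sl_C \<times> sl_C"
    unfolding V_def using W_sl by (intro span_eq_sl_C_if_span_corners)
  then show ?thesis by (simp add: P2_def W_def)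
qed

section \<open>Half of the embeddings\<close>

(* Keep, from each pair {x, f x}, the element coming first in an order of A that starts with x0. *)

lemma involution_half_transversal:
  assumes A: "finite A" "x0 \<in> A" and f: "\<And>x. x \<in> A \<Longrightarrow> f x \<noteq> x" "\<And>x. x \<in> A \<Longrightarrow> f (f x) = x"
  obtains S where "S \<subseteq> A" "x0 \<in> S" "card A \<le> 2 * card S" "\<forall>x\<in>S. f x \<notin> S"
proof -
  obtain h :: "'a \<Rightarrow> nat" where "inj_on h A"
    using finite_imp_inj_to_nat_seg[OF A(1)] by blast
  define r where "r x = (if x = x0 then 0 else Suc (h x))" for x
  have r: "inj_on r A" using \<open>inj_on h A\<close> by (auto simp: r_def inj_on_def)
  define S where "S = {x \<in> A. f x \<notin> A \<or> r x < r (f x)}"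
  have "S \<subseteq> A" by (auto simp: S_def)
  have "x0 \<in> S" using A f(1)[of x0] by (auto simp: S_def r_def)
  have "f x \<notin> S" if x: "x \<in> S" for x
  proof
    assume "f x \<in> S"
    then have "f x \<in> A" "r (f x) < r (f (f x))" using x f(2) by (auto simp: S_def)
    moreover have "x \<in> A" "r x < r (f x)" using x \<open>f x \<in> A\<close> by (auto simp: S_def)
    ultimately show False using f(2) by simp
  qed
  have "A \<subseteq> S \<union> f ` S"
  proof
    fix x assume x: "x \<in> A"
    show "x \<in> S \<union> f ` S"
    proof (cases "x \<in> S")
      case False
      then have "f x \<in> A" "\<not> r x < r (f x)" using x by (auto simp: S_def)
      moreover have "r x \<noteq> r (f x)" using inj_on_contraD[OF r f(1)[OF x, symmetric] x \<open>f x \<in> A\<close>] .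
      ultimately have "f x \<in> S" using f(2)[OF x] by (simp add: S_def)
      then have "f (f x) \<in> f ` S" by (rule imageI)
      then show ?thesis using f(2)[OF x] by simp
    qed simp
  qed
  moreover have "finite S" using \<open>S \<subseteq> A\<close> A(1) by (rule finite_subset)
  ultimately have "card A \<le> card S + card (f ` S)"
    using card_mono[of "S \<union> f ` S" A] card_Un_le[of S "f ` S"] by simp
  then have "card A \<le> 2 * card S" using card_image_le[OF \<open>finite S\<close>, of f] by simp
  then show ?thesis using that \<open>S \<subseteq> A\<close> \<open>x0 \<in> S\<close> \<open>\<And>x. x \<in> S \<Longrightarrow> f x \<notin> S\<close> by blast
qed

lemma conj_aut_conj_aut: "\<sigma> \<in> aut E \<Longrightarrow> conj_aut E (conj_aut E \<sigma>) = \<sigma>"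
  by (auto simp: fun_eq_iff conj_aut_def aut_def)

lemma conj_aut_neq:
  assumes "totally_imaginary E" "\<sigma> \<in> aut E"
  shows "conj_aut E \<sigma> \<noteq> \<sigma>"
proof
  assume eq: "conj_aut E \<sigma> = \<sigma>"
  have "\<sigma> x \<in> \<real>" if "x \<in> E" for x
    using fun_cong[OF eq, of x] that by (simp add: conj_aut_def Reals_cnj_iff)
  then show False
    using assms by (auto simp: totally_imaginary_def aut_def)
qed

lemma P1_eq_sl_C_if_P2_eq:
  assumes "P2 \<sigma> \<tau> K = sl_C \<times> sl_C"
  shows "P1 \<sigma> K = sl_C"
proof -
  have "module_hom cscale2 cscale fst"
    by unfold_locales (simp_all add: cscale2_def)
  from module_hom.span_image[OF this, of "(\<lambda>X. (apply_emb \<sigma> X, apply_emb \<tau> X)) ` K"]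
  have "P1 \<sigma> K = fst ` P2 \<sigma> \<tau> K"
    by (simp add: P1_def P2_def image_image)
  also have "\<dots> = sl_C" using assms zero_in_sl_C by (auto simp: fst_image_times)
  finally show ?thesis .
qed

lemma exists_half_of_embeddings:
  fixes K :: "(complex^'n^'n) set"
  assumes CM: "CM_field E" and E: "subfield_C E" and fin: "finite (aut E)" and K: "K \<subseteq> sl_E E"
    and \<sigma>0: "\<sigma>0 \<in> aut E" "P1 \<sigma>0 K = sl_C"
    and pair: "\<forall>\<sigma>\<in>aut E. \<forall>\<tau>\<in>aut E. \<sigma> \<noteq> \<tau> \<and> \<sigma> \<noteq> conj_aut E \<tau> \<longrightarrow>
      (\<exists>\<kappa>\<in>aut E. P2 (\<kappa> \<circ> \<sigma>) (\<kappa> \<circ> \<tau>) K = sl_C \<times> sl_C)"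
  obtains S where "S \<subseteq> aut E" "card (aut E) \<le> 2 * card S" "\<forall>\<sigma>\<in>S. P1 \<sigma> K = sl_C"
    "\<forall>\<sigma>\<in>S. \<forall>\<tau>\<in>S. \<sigma> \<noteq> \<tau> \<longrightarrow> P2 \<sigma> \<tau> K = sl_C \<times> sl_C"
proof -
  have "totally_imaginary E" using CM by (simp add: CM_field_def)
  then have neq: "conj_aut E \<sigma> \<noteq> \<sigma>" if "\<sigma> \<in> aut E" for \<sigma> using that by (rule conj_aut_neq)
  obtain S where S: "S \<subseteq> aut E" "\<sigma>0 \<in> S" "card (aut E) \<le> 2 * card S"
    "\<forall>\<sigma>\<in>S. conj_aut E \<sigma> \<notin> S"
    by (rule involution_half_transversal[where f = "conj_aut E", OF fin \<sigma>0(1) neq conj_aut_conj_aut])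
  have pairS: "\<forall>\<sigma>\<in>S. \<forall>\<tau>\<in>S. \<sigma> \<noteq> \<tau> \<longrightarrow> P2 \<sigma> \<tau> K = sl_C \<times> sl_C"
  proof (intro ballI impI)
    fix \<sigma> \<tau> assume "\<sigma> \<in> S" "\<tau> \<in> S" "\<sigma> \<noteq> \<tau>"
    then have aut: "\<sigma> \<in> aut E" "\<tau> \<in> aut E" and "\<sigma> \<noteq> conj_aut E \<tau>"
      using S(1,4) by auto
    then obtain \<kappa> where "\<kappa> \<in> aut E" "P2 (\<kappa> \<circ> \<sigma>) (\<kappa> \<circ> \<tau>) K = sl_C \<times> sl_C"
      using pair \<open>\<sigma> \<noteq> \<tau>\<close> by blast
    then show "P2 \<sigma> \<tau> K = sl_C \<times> sl_C"
      by (intro P2_eq_sl_C_descent[OF E aut _ K])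
  qed
  have "P1 \<sigma> K = sl_C" if "\<sigma> \<in> S" for \<sigma>
  proof (cases "\<sigma> = \<sigma>0")
    case False
    then show ?thesis using pairS that S(2) P1_eq_sl_C_if_P2_eq by metis
  qed (use \<sigma>0 in simp)
  then show ?thesis using that[OF S(1,3) _ pairS] by blast
qed

theorem lemma2p2:
  fixes E :: "complex set" and K :: "(complex^'n^'n) set"
  assumes "CM_field E"
    and "galois_over_Q E"
    and "semisimple_Q K"
    and "K \<subseteq> sl_E E"
    and "\<exists>\<sigma>0\<in>aut E. P1 \<sigma>0 K = sl_C"
    and "\<forall>\<sigma>\<in>aut E. \<forall>\<tau>\<in>aut E. \<sigma> \<noteq> \<tau> \<and> \<sigma> \<noteq> conj_aut E \<tau> \<longrightarrow>
           (\<exists>\<kappa>\<in>aut E. P2 (\<kappa> \<circ> \<sigma>) (\<kappa> \<circ> \<tau>) K = sl_C \<times> sl_C)"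
  shows "real (qdim K) \<ge> 1/2 * real (qdeg E) * (real (CARD('n))^2 - 1)"
proof (cases "2 \<le> CARD('n) \<and> finite (aut E)")
  case False
  then have "CARD('n) = 1 \<or> qdeg E = 0"
    using assms(2) by (cases "CARD('n)") (auto simp: galois_over_Q_def)
  then show ?thesis by auto
next
  case True
  have E: "subfield_C E" "finite_over_Q E" and deg: "card (aut E) = qdeg E"
    using assms(2) by (auto simp: galois_over_Q_def)
  obtain S where S: "S \<subseteq> aut E" "card (aut E) \<le> 2 * card S" "\<forall>\<sigma>\<in>S. P1 \<sigma> K = sl_C"
    "\<forall>\<sigma>\<in>S. \<forall>\<tau>\<in>S. \<sigma> \<noteq> \<tau> \<longrightarrow> P2 \<sigma> \<tau> K = sl_C \<times> sl_C"
    using exists_half_of_embeddings[OF assms(1) E(1)] True assms(4-6) by blast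
  have "card S * (CARD('n)^2 - 1) \<le> qdim K"
    using assms(3) S True finite_subset[OF S(1)] aut_field_hom_on
    by (intro card_mult_le_qdim[OF E assms(4)]) (auto simp: semisimple_Q_def)
  then have "real (card S * (CARD('n)^2 - 1)) \<le> real (qdim K)" by (rule of_nat_mono)
  moreover have "1 \<le> CARD('n)^2" using True by simp
  ultimately have "real (card S) * (real (CARD('n))^2 - 1) \<le> real (qdim K)"
    by (simp add: of_nat_diff)
  moreover have "1/2 * real (qdeg E) * (real (CARD('n))^2 - 1) \<le> real (card S) * (real (CARD('n))^2 - 1)"
    using S(2) deg by (intro mult_right_mono) auto
  ultimately show ?thesis by linarith
qed

end
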